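(* Each of the two cyclic Steiner triple systems of order $15$ on $\mathbb{Z}_{15}$, namely the one generated (under $i\mapsto i+1 \bmod 15$) by the base blocks $\{0,1,4\},\{0,2,8\},\{0,5,10\}$ and the one generated by the base blocks $\{0,1,4\},\{0,2,9\},\{0,5,10\}$, admits a zero-sum $3$-flow.
   Context: The blocks of the system generated by base blocks are all translates $\{a+i,b+i,c+i\}$ (mod 15) of the base blocks; the base block $\{0,5,10\}$ generates only 5 distinct blocks. For a design $(X,\mathcal{B})$, a zero-sum $3$-flow is a map $f:\mathcal{B}\to\{\pm1,\pm2\}$ such that $\sum_{B\ni x} f(B)=0$ for every point $x\in X$. *)

theory Defs
  imports Main
begin

definition Z15 :: "nat set" where
  "Z15 = {0..<15}"

definition translate15 :: "nat set \<Rightarrow> nat \<Rightarrow> nat set" where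
  "translate15 B i = (\<lambda>b. (b + i) mod 15) ` B"

text \<open>Block set generated by base blocks: all distinct translates (as a set of blocks,
  so the short orbit of {0,5,10} contributes only 5 blocks).\<close>
definition cyclic_blocks15 :: "nat set set \<Rightarrow> nat set set" where
  "cyclic_blocks15 Bases = {translate15 B i | B i. B \<in> Bases \<and> i < 15}"

definition zero_sum_3_flow :: "'a set \<Rightarrow> 'a set set \<Rightarrow> ('a set \<Rightarrow> int) \<Rightarrow> bool" where
  "zero_sum_3_flow X Bs f \<longleftrightarrow>
     (\<forall>B\<in>Bs. f B \<in> {-2, -1, 1, 2}) \<and>
     (\<forall>x\<in>X. (\<Sum>B\<in>{B\<in>Bs. x \<in> B}. f B) = 0)"

end

theory Submission
  imports Defs
begin

(* A zero-sum 3-flow of either system cannot be invariant under translation: every point lies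
   in three blocks of each orbit of length 15 and in one block of the orbit of {0,5,10}, so
   constant values a, b, c on the orbits would satisfy 3a + 3b + c = 0, forcing 3 | c. So each
   flow is given as an explicit table of weighted blocks. Blocks are encoded as strictly
   increasing lists, which identifies them with their point sets, and checking a table reduces
   to evaluating finitely many list sums. *)

definition block_weight :: "('a::linorder list \<times> int) list \<Rightarrow> 'a set \<Rightarrow> int" where
  "block_weight W B = the (map_of W (sorted_list_of_set B))"

lemma sorted_list_of_set_set_strict_sorted:
  "sorted_wrt (<) xs \<Longrightarrow> sorted_list_of_set (set xs) = xs"
  by (simp add: sorted_list_of_set_sort_remdups strict_sorted_iff distinct_remdups_id sorted_sort_id)

lemma block_weight_set:
  assumes "distinct (map fst W)" and "(t, w) \<in> set W" and "sorted_wrt (<) t"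
  shows "block_weight W (set t) = w"
  using assms by (simp add: block_weight_def sorted_list_of_set_set_strict_sorted)

lemma sum_block_weight_containing:
  assumes distinct: "distinct (map fst W)" and sorted: "\<forall>t\<in>fst ` set W. sorted_wrt (<) t"
  shows "(\<Sum>B\<in>{B \<in> set ` fst ` set W. x \<in> B}. block_weight W B)
       = (\<Sum>(t, w)\<leftarrow>W. if x \<in> set t then w else 0)"
proof -
  let ?T = "fst ` set W"
  have "inj_on set ?T"
    using sorted by (auto intro!: inj_onI strict_sorted_equal)
  moreover have "{B \<in> set ` ?T. x \<in> B} = set ` {t \<in> ?T. x \<in> set t}"
    by blast
  ultimately have "(\<Sum>B\<in>{B \<in> set ` ?T. x \<in> B}. block_weight W B)
      = (\<Sum>t\<in>{t \<in> ?T. x \<in> set t}. block_weight W (set t))"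
    by (simp add: sum.reindex inj_on_subset [of set ?T])
  also have "\<dots> = (\<Sum>p\<in>set W. if x \<in> set (fst p) then snd p else 0)"
  proof -
    have weight: "block_weight W (set t) = w" if "(t, w) \<in> set W" for t w
      using that distinct sorted by (force intro: block_weight_set)
    from distinct show ?thesis
      by (auto simp: sum.inter_filter sum.reindex distinct_map weight intro!: sum.cong)
  qed
  also have "\<dots> = (\<Sum>(t, w)\<leftarrow>W. if x \<in> set t then w else 0)"
    using distinct by (simp add: sum_list_distinct_conv_sum_set distinct_map split_beta)
  finally show ?thesis .
qed

lemma zero_sum_3_flow_block_weight:
  assumes "distinct (map fst W)" and "\<forall>t\<in>fst ` set W. sorted_wrt (<) t"
    and "\<forall>w\<in>snd ` set W. w \<in> {-2, -1, 1, 2}"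
    and "\<forall>x\<in>X. (\<Sum>(t, w)\<leftarrow>W. if x \<in> set t then w else 0) = 0"
  shows "zero_sum_3_flow X (set ` fst ` set W) (block_weight W)"
proof -
  have "block_weight W B \<in> {-2, -1, 1, 2}" if "B \<in> set ` fst ` set W" for B
  proof -
    from that obtain t w where "(t, w) \<in> set W" and "B = set t"
      by force
    with assms(1-3) show ?thesis
      by (force simp: block_weight_set)
  qed
  with assms show ?thesis
    by (simp add: zero_sum_3_flow_def sum_block_weight_containing)
qed

definition translates15 :: "nat list \<Rightarrow> nat list list" where
  "translates15 t = map (\<lambda>i. sort (map (\<lambda>b. (b + i) mod 15) t)) [0..<15]"

lemma cyclic_blocks15_set:
  "cyclic_blocks15 (set ` set Bs) = set ` set (concat (map translates15 Bs))"
proof -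
  have "cyclic_blocks15 (set ` set Bs) = {translate15 (set t) i | t i. t \<in> set Bs \<and> i < 15}"
    by (auto simp: cyclic_blocks15_def)
  also have "\<dots> = {set (sort (map (\<lambda>b. (b + i) mod 15) t)) | t i. t \<in> set Bs \<and> i < 15}"
    by (simp only: translate15_def set_sort set_map)
  also have "\<dots> = set ` set (concat (map translates15 Bs))"
    unfolding translates15_def
    by (auto simp: image_iff simp del: set_sort) (use atLeastLessThan_iff in blast)+
  finally show ?thesis .
qed

lemma cyclic_zero_sum_3_flow:
  fixes W :: "(nat list \<times> int) list"
  assumes "set (concat (map translates15 Bs)) = set (map fst W)"
    and "distinct (map fst W)" and "\<forall>t\<in>fst ` set W. sorted_wrt (<) t"
    and "\<forall>w\<in>snd ` set W. w \<in> {-2, -1, 1, 2}"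
    and "\<forall>x\<in>set [0..<15]. (\<Sum>(t, w)\<leftarrow>W. if x \<in> set t then w else 0) = 0"
  shows "\<exists>f. zero_sum_3_flow Z15 (cyclic_blocks15 (set ` set Bs)) f"
proof
  show "zero_sum_3_flow Z15 (cyclic_blocks15 (set ` set Bs)) (block_weight W)"
    unfolding cyclic_blocks15_set assms(1) Z15_def
    using assms(2-5) by (simp add: zero_sum_3_flow_block_weight)
qed

definition flow_028 :: "(nat list \<times> int) list" where
  "flow_028 = [([0,1,4], -1), ([0,2,8], 1), ([0,3,14], 1), ([0,5,10], 1), ([0,6,13], 1),
    ([0,7,9], -2), ([0,11,12], -1), ([1,2,5], 1), ([1,3,9], 1), ([1,6,11], -2), ([1,7,14], 1),
    ([1,8,10], 1), ([1,12,13], -1), ([2,3,6], -1), ([2,4,10], -1), ([2,7,12], 1), ([2,9,11], 1),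
    ([2,13,14], -2), ([3,4,7], -1), ([3,5,11], 1), ([3,8,13], 1), ([3,10,12], -2), ([4,5,8], -2),
    ([4,6,12], 2), ([4,9,14], 1), ([4,11,13], 2), ([5,6,9], -1), ([5,7,13], 1), ([5,12,14], -1),
    ([6,7,10], 2), ([6,8,14], -1), ([7,8,11], -2), ([8,9,12], 2), ([9,10,13], -2), ([10,11,14], 1)]"

definition flow_029 :: "(nat list \<times> int) list" where
  "flow_029 = [([0,1,4], 2), ([0,2,9], -1), ([0,3,14], 1), ([0,5,10], -1), ([0,6,8], -1),
    ([0,7,13], -1), ([0,11,12], 1), ([1,2,5], 1), ([1,3,10], -1), ([1,6,11], 2), ([1,7,9], -1),
    ([1,8,14], -1), ([1,12,13], -2), ([2,3,6], -2), ([2,4,11], -2), ([2,7,12], 1), ([2,8,10], 1),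
    ([2,13,14], 2), ([3,4,7], -1), ([3,5,12], -1), ([3,8,13], 2), ([3,9,11], 2), ([4,5,8], -1),
    ([4,6,13], 1), ([4,9,14], -1), ([4,10,12], 2), ([5,6,9], 1), ([5,7,14], 2), ([5,11,13], -1),
    ([6,7,10], 1), ([6,12,14], -2), ([7,8,11], -1), ([8,9,12], 1), ([9,10,13], -1), ([10,11,14], -1)]"

theorem mainTheorem8:
  shows "(\<exists>f. zero_sum_3_flow Z15 (cyclic_blocks15 {{0,1,4}, {0,2,8}, {0,5,10}}) f)
       \<and> (\<exists>f. zero_sum_3_flow Z15 (cyclic_blocks15 {{0,1,4}, {0,2,9}, {0,5,10}}) f)"
proof -
  have "\<exists>f. zero_sum_3_flow Z15 (cyclic_blocks15 (set ` set [[0,1,4], [0,2,8], [0,5,10]])) f"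
    by (rule cyclic_zero_sum_3_flow [where W = flow_028])
      (simp_all add: flow_028_def translates15_def upt_rec set_eq_subset)
  moreover have "\<exists>f. zero_sum_3_flow Z15 (cyclic_blocks15 (set ` set [[0,1,4], [0,2,9], [0,5,10]])) f"
    by (rule cyclic_zero_sum_3_flow [where W = flow_029])
      (simp_all add: flow_029_def translates15_def upt_rec set_eq_subset)
  ultimately show ?thesis
    by simp
qed

end
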